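(* Let ${\cal F}$ be a nonprincipal filter on $\omega$, and for sequences $\hat s=\{s_n\}$ with $s_n\in(0,\tfrac12]$ let $\mu_{\hat s}$ denote the corresponding product measure on $2^\omega$. (1) If $\hat p,\hat q$ are such sequences with $p_n\le q_n$ for all but finitely many $n$, and $\mu_{\hat q}({\cal F})=0$, then $\mu_{\hat p}({\cal F})=0$. (2) If ${\cal F}$ is nonmeasurable with respect to both $\mu_{\hat p}$ and $\mu_{\hat q}$, and $r_n=\min\{p_n,q_n\}$ for $n\in\omega$, then ${\cal F}$ is $\mu_{\hat r}$-nonmeasurable.
   Context: Subsets of $\omega$ are identified with their characteristic functions, so filters on $\omega$ are subsets of $2^\omega$. For $\hat s=\{s_n:n\in\omega\}$ with $s_n\in(0,\tfrac12]$, $\mu_{\hat s}$ is the product measure on $2^\omega$ with $\mu_{\hat s}(\{x:x(n)=1\})=s_n$ and $\mu_{\hat s}(\{x:x(n)=0\})=1-s_n$. *)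

theory Defs
  imports "HOL-Probability.Probability"
begin

text \<open>Subsets of omega are identified with their characteristic functions
  \<open>nat \<Rightarrow> bool\<close>; the Cantor space \<open>2^\<omega>\<close> is the type \<open>nat \<Rightarrow> bool\<close>.\<close>

definition prod_meas :: "(nat \<Rightarrow> real) \<Rightarrow> (nat \<Rightarrow> bool) measure" where
  "prod_meas s = PiM UNIV (\<lambda>n. measure_pmf (bernoulli_pmf (s n)))"

text \<open>A filter on omega viewed as a subset of \<open>2^\<omega>\<close>: the set of characteristic
  functions of its members.\<close>
definition filter_set :: "nat filter \<Rightarrow> (nat \<Rightarrow> bool) set" where
  "filter_set F = {x. eventually x F}"

definition admissible_seq :: "(nat \<Rightarrow> real) \<Rightarrow> bool" where
  "admissible_seq s \<longleftrightarrow> (\<forall>n. 0 < s n \<and> s n \<le> 1/2)"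

end

theory Submission
  imports Defs
begin

text \<open>Everything is transported along couplings. If for every \<open>n\<close> the law
  \<open>Bernoulli(b n)\<close> is the image of \<open>Bernoulli(a n) \<times> Bernoulli(t n)\<close> under some
  \<open>\<phi> n\<close>, then \<open>\<mu>_b\<close> is the image of \<open>\<mu>_a \<otimes> \<mu>_t\<close> under the coordinatewise map, and by
  Fubini a set whose points are sent into a \<open>\<mu>_b\<close>-null set, whatever the second argument,
  is \<open>\<mu>_a\<close>-null. With \<open>\<phi> = (\<or>)\<close> this shows that for \<open>p \<le> q\<close> every \<open>\<mu>_q\<close>-null upward
  closed set is \<open>\<mu>_p\<close>-null; with coordinate selectors, that a set determined by
  coordinates on which \<open>p = q\<close> is \<open>\<mu>_p\<close>-null iff it is \<open>\<mu>_q\<close>-null. A nonprincipal filter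
  ignores finitely many coordinates, which gives (1).

  For (2), a measurable nonprincipal filter is a tail set, hence null or conull by
  Kolmogorov's zero-one law. It is not conull for \<open>r \<le> 1/2\<close>: negation carries \<open>\<mu>_r\<close> to
  \<open>\<mu>_(1-r)\<close>, which dominates \<open>\<mu>_r\<close> on the upward closed set \<open>{x. \<not>x \<notin> F} \<supseteq> F\<close>. Finally
  \<open>F = F\<^sub>1 \<inter> F\<^sub>2\<close>, where \<open>F\<^sub>1\<close> is determined by the coordinates with \<open>min p q = p\<close> and
  \<open>F\<^sub>2\<close> by the others, and independence of the two blocks forces one of them to be null.\<close>

section \<open>Null sets under measure preserving maps on products\<close>

lemma null_sets_completion_pair_split:
  assumes M: "sigma_finite_measure M" and N: "sigma_finite_measure N"
    and f: "f \<in> measurable (M \<Otimes>\<^sub>M N) K" and distr: "distr (M \<Otimes>\<^sub>M N) K f = K"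
    and S: "S \<in> null_sets (completion K)"
    and S1: "S1 \<subseteq> space M" and S2: "S2 \<subseteq> space N"
    and into: "\<And>x z. x \<in> S1 \<Longrightarrow> z \<in> S2 \<Longrightarrow> f (x, z) \<in> S"
  shows "S1 \<in> null_sets (completion M) \<or> S2 \<in> null_sets (completion N)"
proof -
  interpret pair_sigma_finite M N using M N by (rule pair_sigma_finite.intro)
  obtain S0 where S0: "S0 \<in> null_sets K" "S \<subseteq> S0"
    using S by (auto simp: null_sets_completion_iff2)
  have "AE y in distr (M \<Otimes>\<^sub>M N) K f. y \<notin> S0"
    using S0(1) by (simp add: distr AE_not_in)
  then have "AE w in M \<Otimes>\<^sub>M N. f w \<notin> S0"
    by (rule AE_distrD[OF f])
  then have "AE x in M. AE z in N. f (x, z) \<notin> S0"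
    by (rule AE_pair)
  then obtain N1 where N1: "\<And>x. x \<in> space M - N1 \<Longrightarrow> AE z in N. f (x, z) \<notin> S0" "N1 \<in> null_sets M"
    by (elim AE_E3) blast
  show ?thesis
  proof (cases "S1 \<subseteq> N1")
    case True
    then show ?thesis using N1(2) by (auto simp: null_sets_completion_iff2)
  next
    case False
    then obtain x where x: "x \<in> S1" "x \<notin> N1" by auto
    have "AE z in N. f (x, z) \<notin> S0"
      using N1(1) x S1 by auto
    then have "AE z in N. z \<notin> S2"
      using into[OF x(1)] S0(2) by (auto elim: AE_mp)
    then obtain N2 where "\<And>z. z \<in> space N - N2 \<Longrightarrow> z \<notin> S2" "N2 \<in> null_sets N"
      by (elim AE_E3) blast
    then have "S2 \<subseteq> N2" using S2 by blast
    with \<open>N2 \<in> null_sets N\<close> show ?thesis by (auto simp: null_sets_completion_iff2)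
  qed
qed

corollary null_sets_completion_pullback:
  assumes M: "sigma_finite_measure M" and N: "prob_space N"
    and f: "f \<in> measurable (M \<Otimes>\<^sub>M N) K" and distr: "distr (M \<Otimes>\<^sub>M N) K f = K"
    and S: "S \<in> null_sets (completion K)" and S1: "S1 \<subseteq> space M"
    and into: "\<And>x z. x \<in> S1 \<Longrightarrow> z \<in> space N \<Longrightarrow> f (x, z) \<in> S"
  shows "S1 \<in> null_sets (completion M)"
proof -
  have "space N \<notin> null_sets (completion N)"
    using prob_space.emeasure_space_1[OF N] by (auto simp: null_sets_def)
  with null_sets_completion_pair_split[OF M prob_space_imp_sigma_finite[OF N] f distr S S1 order_refl]
  show ?thesis using into by blast
qed

section \<open>Couplings of Bernoulli product measures\<close>

lemma space_prod_meas [simp]: "space (prod_meas s) = UNIV"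
  by (auto simp: prod_meas_def space_PiM PiE_def extensional_def)

lemma prob_space_prod_meas: "prob_space (prod_meas s)"
  unfolding prod_meas_def by (intro prob_space_PiM prob_space_measure_pmf)

lemma sets_prod_meas: "sets (prod_meas s) = sets (PiM UNIV (\<lambda>_. count_space (UNIV :: bool set)))"
  unfolding prod_meas_def by (rule sets_PiM_cong) auto

lemma measurable_prod_meas_component [measurable]:
  "(\<lambda>x. x i) \<in> measurable (prod_meas s) (count_space UNIV)"
  unfolding measurable_cong_sets[OF sets_prod_meas refl] by measurable

lemma measurable_prod_measI:
  assumes "\<And>i. (\<lambda>x. f x i) \<in> measurable N (count_space UNIV)"
  shows "f \<in> measurable N (prod_meas s)"
  unfolding measurable_cong_sets[OF refl sets_prod_meas]
  by (rule measurable_PiM_single') (use assms in auto)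

lemma nn_integral_PiM_prod:
  assumes M: "\<And>i. prob_space (M i)" and J: "finite J"
    and g: "\<And>i. i \<in> J \<Longrightarrow> g i \<in> borel_measurable (M i)"
  shows "(\<integral>\<^sup>+x. (\<Prod>i\<in>J. g i (x i)) \<partial>PiM UNIV M) = (\<Prod>i\<in>J. \<integral>\<^sup>+y. g i y \<partial>M i)"
proof -
  interpret product_prob_space M UNIV
    using M by (simp add: product_prob_space_def product_sigma_finite_def prob_space_imp_sigma_finite
        product_prob_space_axioms_def)
  have restrict: "(\<lambda>x. restrict x J) \<in> measurable (PiM UNIV M) (PiM J M)"
    by (rule measurable_restrict_subset) simp
  have prod_g: "(\<lambda>y. \<Prod>i\<in>J. g i (y i)) \<in> borel_measurable (PiM J M)"
    using g by (intro borel_measurable_prod_ennreal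
        measurable_comp[OF measurable_component_singleton, unfolded comp_def]) auto
  have "(\<integral>\<^sup>+x. (\<Prod>i\<in>J. g i (x i)) \<partial>PiM UNIV M)
      = (\<integral>\<^sup>+x. (\<Prod>i\<in>J. g i (restrict x J i)) \<partial>PiM UNIV M)"
    by (intro nn_integral_cong prod.cong) auto
  also have "\<dots> = (\<integral>\<^sup>+y. (\<Prod>i\<in>J. g i (y i)) \<partial>distr (PiM UNIV M) (PiM J M) (\<lambda>x. restrict x J))"
    using nn_integral_distr[OF restrict, of "\<lambda>y. \<Prod>i\<in>J. g i (y i)"] prod_g by simp
  also have "\<dots> = (\<integral>\<^sup>+y. (\<Prod>i\<in>J. g i (y i)) \<partial>PiM J M)"
    using J by (simp add: distr_PiM_restrict_finite)
  also have "\<dots> = (\<Prod>i\<in>J. \<integral>\<^sup>+y. g i y \<partial>M i)"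
    using J g by (intro product_nn_integral_prod) auto
  finally show ?thesis .
qed

lemma emeasure_map_pair_pmf:
  "emeasure (map_pmf \<phi> (pair_pmf A B)) X = (\<integral>\<^sup>+\<alpha>. emeasure B {\<beta>. \<phi> (\<alpha>, \<beta>) \<in> X} \<partial>A)"
  by (simp add: nn_integral_indicator[symmetric] nn_integral_pair_pmf' del: nn_integral_indicator)
     (auto intro!: nn_integral_cong simp: indicator_def)

lemma measurable_prod_meas_coordinatewise:
  "(\<lambda>w n. \<phi> n (fst w n, snd w n)) \<in> measurable (prod_meas a \<Otimes>\<^sub>M prod_meas t) (prod_meas b)"
  by (rule measurable_prod_measI) measurable

lemma distr_prod_meas_coupling:
  assumes coupling: "\<And>n. map_pmf (\<phi> n) (pair_pmf (bernoulli_pmf (a n)) (bernoulli_pmf (t n)))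
                          = bernoulli_pmf (b n)"
  shows "distr (prod_meas a \<Otimes>\<^sub>M prod_meas t) (prod_meas b) (\<lambda>w n. \<phi> n (fst w n, snd w n))
       = prod_meas b"
proof -
  let ?B = "\<lambda>n. measure_pmf (bernoulli_pmf (b n))"
  let ?T = "\<lambda>n. measure_pmf (bernoulli_pmf (t n))"
  let ?P = "prod_meas a \<Otimes>\<^sub>M prod_meas t"
  let ?\<Phi> = "\<lambda>w n. \<phi> n (fst w n, snd w n)"
  interpret T: prob_space "prod_meas t" by (rule prob_space_prod_meas)
  interpret P: prob_space ?P
    by (intro prob_space_pair prob_space_prod_meas)
  show ?thesis
  proof (rule measure_eqI_PiM_infinite[where I=UNIV and M="?B"])
    show "sets (distr ?P (prod_meas b) ?\<Phi>) = sets (PiM UNIV ?B)"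
      by (simp add: prod_meas_def)
    show "sets (prod_meas b) = sets (PiM UNIV ?B)"
      by (simp add: prod_meas_def)
    show "finite_measure (distr ?P (prod_meas b) ?\<Phi>)"
      using P.prob_space_distr[OF measurable_prod_meas_coordinatewise]
      by (simp add: prob_space_def)
  next
    fix A J assume J: "finite J" and A: "\<And>i. i \<in> J \<Longrightarrow> A i \<in> sets (?B i)"
    let ?X = "prod_emb UNIV ?B J (Pi\<^sub>E J A)"
    let ?G = "{w. \<forall>i\<in>J. \<phi> i (fst w i, snd w i) \<in> A i}"
    have X: "?X \<in> sets (prod_meas b)"
      unfolding prod_meas_def using J A by (intro sets_PiM_I) auto
    have G: "?\<Phi> -` ?X \<inter> space ?P = ?G"
      by (auto simp: prod_emb_def space_pair_measure)
    have "emeasure (distr ?P (prod_meas b) ?\<Phi>) ?X = emeasure ?P ?G"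
      using emeasure_distr[OF measurable_prod_meas_coordinatewise X] G by simp
    also have "\<dots> = (\<integral>\<^sup>+x. emeasure (prod_meas t) (Pair x -` ?G) \<partial>prod_meas a)"
      using measurable_sets[OF measurable_prod_meas_coordinatewise[of \<phi> a t b] X] G
      by (simp add: T.emeasure_pair_measure_alt)
    also have "\<dots> = (\<integral>\<^sup>+x. (\<Prod>i\<in>J. emeasure (?T i) {\<beta>. \<phi> i (x i, \<beta>) \<in> A i}) \<partial>prod_meas a)"
    proof (intro nn_integral_cong)
      fix x
      have "Pair x -` ?G = prod_emb UNIV ?T J (Pi\<^sub>E J (\<lambda>i. {\<beta>. \<phi> i (x i, \<beta>) \<in> A i}))"
        by (auto simp: prod_emb_def)
      then show "emeasure (prod_meas t) (Pair x -` ?G)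
          = (\<Prod>i\<in>J. emeasure (?T i) {\<beta>. \<phi> i (x i, \<beta>) \<in> A i})"
        unfolding prod_meas_def using J by (simp add: emeasure_PiM_emb prob_space_measure_pmf)
    qed
    also have "\<dots> = (\<Prod>i\<in>J. \<integral>\<^sup>+\<alpha>. emeasure (?T i) {\<beta>. \<phi> i (\<alpha>, \<beta>) \<in> A i} \<partial>bernoulli_pmf (a i))"
      unfolding prod_meas_def using J by (intro nn_integral_PiM_prod prob_space_measure_pmf) auto
    also have "\<dots> = (\<Prod>i\<in>J. emeasure (?B i) (A i))"
      by (simp add: coupling[symmetric] emeasure_map_pair_pmf del: emeasure_map_pmf)
    also have "\<dots> = emeasure (prod_meas b) ?X"
      unfolding prod_meas_def using J by (simp add: emeasure_PiM_emb prob_space_measure_pmf)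
    finally show "emeasure (distr ?P (prod_meas b) ?\<Phi>) ?X = emeasure (prod_meas b) ?X" .
  qed
qed

lemma null_sets_prod_meas_coupling_split:
  assumes coupling: "\<And>n. map_pmf (\<phi> n) (pair_pmf (bernoulli_pmf (a n)) (bernoulli_pmf (t n)))
                          = bernoulli_pmf (b n)"
    and S: "S \<in> null_sets (completion (prod_meas b))"
    and into: "\<And>x z. x \<in> S1 \<Longrightarrow> z \<in> S2 \<Longrightarrow> (\<lambda>n. \<phi> n (x n, z n)) \<in> S"
  shows "S1 \<in> null_sets (completion (prod_meas a)) \<or> S2 \<in> null_sets (completion (prod_meas t))"
  using into
  by (intro null_sets_completion_pair_split[OF _ _ measurable_prod_meas_coordinatewise
        distr_prod_meas_coupling[OF coupling] S])
     (auto intro: prob_space_imp_sigma_finite prob_space_prod_meas)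

lemma null_sets_prod_meas_coupling:
  assumes coupling: "\<And>n. map_pmf (\<phi> n) (pair_pmf (bernoulli_pmf (a n)) (bernoulli_pmf (t n)))
                          = bernoulli_pmf (b n)"
    and S: "S \<in> null_sets (completion (prod_meas b))"
    and into: "\<And>x z. x \<in> S1 \<Longrightarrow> (\<lambda>n. \<phi> n (x n, z n)) \<in> S"
  shows "S1 \<in> null_sets (completion (prod_meas a))"
  using into
  by (intro null_sets_completion_pullback[OF _ prob_space_prod_meas measurable_prod_meas_coordinatewise
        distr_prod_meas_coupling[OF coupling] S])
     (auto intro: prob_space_imp_sigma_finite prob_space_prod_meas)

lemma bernoulli_pmf_eqI:
  assumes "pmf M False = 1 - p" "0 \<le> p" "p \<le> 1"
  shows "M = bernoulli_pmf p"
proof (rule pmf_eqI)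
  have "(\<Sum>b\<in>UNIV. pmf M b) = 1"
    by (rule sum_pmf_eq_1) auto
  then show "pmf M b = pmf (bernoulli_pmf p) b" for b
    using assms by (cases b) (auto simp: UNIV_bool)
qed

lemma map_pmf_Not_bernoulli_pmf:
  "map_pmf Not (bernoulli_pmf p) = bernoulli_pmf (1 - p)" if "0 \<le> p" "p \<le> 1"
proof (rule bernoulli_pmf_eqI)
  have "Not -` {False} = {True}"
    by auto
  then show "pmf (map_pmf Not (bernoulli_pmf p)) False = 1 - (1 - p)"
    using that by (simp add: pmf_map measure_pmf_single)
qed (use that in auto)

text \<open>The witness solves \<open>p + t - p t = q\<close>; for \<open>p = 1\<close> the division by zero
  yields \<open>t = 0\<close>, which still works since then \<open>q = 1\<close>.\<close>
lemma map_pmf_disj_pair_bernoulli_pmf: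
  assumes "0 \<le> p" "p \<le> q" "q \<le> 1"
  shows "map_pmf (\<lambda>(\<alpha>, \<beta>). \<alpha> \<or> \<beta>) (pair_pmf (bernoulli_pmf p) (bernoulli_pmf ((q - p) / (1 - p))))
       = bernoulli_pmf q"
proof (rule bernoulli_pmf_eqI)
  let ?t = "(q - p) / (1 - p)"
  have t: "0 \<le> ?t" "?t \<le> 1"
    using assms by (auto simp: divide_le_eq_1)
  have complement: "(1 - p) * (1 - ?t) = 1 - q"
    using assms by (cases "p = 1") (auto simp: field_simps)
  have "(\<lambda>(\<alpha>, \<beta>). \<alpha> \<or> \<beta>) -` {False} = {(False, False)}"
    by auto
  then show "pmf (map_pmf (\<lambda>(\<alpha>, \<beta>). \<alpha> \<or> \<beta>) (pair_pmf (bernoulli_pmf p) (bernoulli_pmf ?t))) False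
      = 1 - q"
    using t complement assms by (simp add: pmf_map measure_pmf_single pmf_pair)
qed (use assms in auto)

definition determined_on :: "'i set \<Rightarrow> ('i \<Rightarrow> 'a) set \<Rightarrow> bool" where
  "determined_on I S \<longleftrightarrow> (\<forall>x y. x \<in> S \<longrightarrow> (\<forall>i\<in>I. y i = x i) \<longrightarrow> y \<in> S)"

lemma determined_onD: "determined_on I S \<Longrightarrow> x \<in> S \<Longrightarrow> (\<And>i. i \<in> I \<Longrightarrow> y i = x i) \<Longrightarrow> y \<in> S"
  unfolding determined_on_def by blast

lemma null_sets_prod_meas_eq_on:
  assumes S: "determined_on I S" and eq: "\<And>n. n \<in> I \<Longrightarrow> p n = q n"
    and null: "S \<in> null_sets (completion (prod_meas q))"
  shows "S \<in> null_sets (completion (prod_meas p))"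
proof (rule null_sets_prod_meas_coupling[OF _ null])
  show "map_pmf (if n \<in> I then fst else snd) (pair_pmf (bernoulli_pmf (p n)) (bernoulli_pmf (q n)))
      = bernoulli_pmf (q n)" for n
    using eq[of n] by (simp add: map_fst_pair_pmf map_snd_pair_pmf)
  show "(\<lambda>n. (if n \<in> I then fst else snd) (x n, z n)) \<in> S" if "x \<in> S" for x z
    using that by (rule determined_onD[OF S]) simp
qed

lemma null_sets_prod_meas_determined_split:
  assumes S1: "determined_on (- B) S1" and S2: "determined_on B S2"
    and null: "S1 \<inter> S2 \<in> null_sets (completion (prod_meas r))"
  shows "S1 \<in> null_sets (completion (prod_meas r)) \<or> S2 \<in> null_sets (completion (prod_meas r))"
proof (rule null_sets_prod_meas_coupling_split[OF _ null])
  show "map_pmf (if n \<in> B then snd else fst) (pair_pmf (bernoulli_pmf (r n)) (bernoulli_pmf (r n)))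
      = bernoulli_pmf (r n)" for n
    by (simp add: map_fst_pair_pmf map_snd_pair_pmf)
  show "(\<lambda>n. (if n \<in> B then snd else fst) (x n, z n)) \<in> S1 \<inter> S2" if "x \<in> S1" "z \<in> S2" for x z
    using determined_onD[OF S1 that(1)] determined_onD[OF S2 that(2)] by simp
qed

lemma null_sets_prod_meas_upward_closed_mono:
  assumes up: "\<And>x y. x \<in> S \<Longrightarrow> (\<And>n. x n \<Longrightarrow> y n) \<Longrightarrow> y \<in> S"
    and pq: "\<And>n. 0 \<le> p n" "\<And>n. p n \<le> q n" "\<And>n. q n \<le> 1"
    and null: "S \<in> null_sets (completion (prod_meas q))"
  shows "S \<in> null_sets (completion (prod_meas p))"
proof (rule null_sets_prod_meas_coupling[OF _ null])
  show "map_pmf (\<lambda>(\<alpha>, \<beta>). \<alpha> \<or> \<beta>)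
          (pair_pmf (bernoulli_pmf (p n)) (bernoulli_pmf ((q n - p n) / (1 - p n))))
      = bernoulli_pmf (q n)" for n
    using pq by (intro map_pmf_disj_pair_bernoulli_pmf)
  show "(\<lambda>n. (\<lambda>(\<alpha>, \<beta>). \<alpha> \<or> \<beta>) (x n, z n)) \<in> S" if "x \<in> S" for x z
    using up[OF that] by simp
qed

lemma null_sets_prod_meas_Not:
  assumes r: "\<And>n. 0 \<le> r n" "\<And>n. r n \<le> 1"
    and null: "S \<in> null_sets (completion (prod_meas r))"
  shows "{x. (\<lambda>n. \<not> x n) \<in> S} \<in> null_sets (completion (prod_meas (\<lambda>n. 1 - r n)))"
proof (rule null_sets_prod_meas_coupling[OF _ null])
  show "map_pmf (\<lambda>(\<alpha>, \<beta>). \<not> \<alpha>) (pair_pmf (bernoulli_pmf (1 - r n)) (bernoulli_pmf (r n)))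
      = bernoulli_pmf (r n)" for n
  proof -
    have "map_pmf (\<lambda>(\<alpha>, \<beta>). \<not> \<alpha>) (pair_pmf (bernoulli_pmf (1 - r n)) (bernoulli_pmf (r n)))
        = map_pmf Not (map_pmf fst (pair_pmf (bernoulli_pmf (1 - r n)) (bernoulli_pmf (r n))))"
      by (simp add: pmf.map_comp case_prod_unfold comp_def)
    then show ?thesis
      using r[of n] by (simp add: map_fst_pair_pmf map_pmf_Not_bernoulli_pmf)
  qed
qed auto

section \<open>Zero-one law for tail sets\<close>

lemma determined_on_atLeast_in_sigma_sets:
  assumes T: "T \<in> sets (prod_meas s)" and det: "determined_on {n..} T"
  shows "T \<in> sigma_sets UNIV {(\<lambda>x. x i) -` B | i B. n \<le> i}"
proof -
  let ?G = "{(\<lambda>x::nat \<Rightarrow> bool. x i) -` B | i B. n \<le> i}"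
  define g where "g x = (\<lambda>m. if m < n then False else x m)" for x :: "nat \<Rightarrow> bool"
  have "g \<in> measurable (sigma UNIV ?G) (prod_meas s)"
  proof (rule measurable_prod_measI)
    fix i
    have "(\<lambda>x. x i) \<in> measurable (sigma UNIV ?G) (count_space UNIV)" if "n \<le> i"
      using that by (intro measurableI) (auto intro: sigma_sets.Basic)
    then show "(\<lambda>x. g x i) \<in> measurable (sigma UNIV ?G) (count_space UNIV)"
      by (cases "i < n") (auto simp: g_def)
  qed
  from measurable_sets[OF this T] have "g -` T \<in> sigma_sets UNIV ?G"
    by simp
  moreover have "g -` T = T"
  proof -
    have "g x i = x i" if "i \<in> {n..}" for x i
      using that by (simp add: g_def)
    then have "g x \<in> T \<longleftrightarrow> x \<in> T" for x
      using determined_onD[OF det, of x "g x"] determined_onD[OF det, of "g x" x] by auto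
    then show ?thesis by auto
  qed
  ultimately show ?thesis by simp
qed

lemma prod_meas_tail_zero_one:
  assumes T: "T \<in> sets (prod_meas s)" and tail: "\<And>n. determined_on {n..} T"
  shows "emeasure (prod_meas s) T = 0 \<or> emeasure (prod_meas s) T = 1"
proof -
  interpret P: prob_space "prod_meas s" by (rule prob_space_prod_meas)
  let ?M = "\<lambda>i. measure_pmf (bernoulli_pmf (s i))"
  let ?X = "\<lambda>i x. x i :: bool"
  define A where "A i = sigma_sets (space (prod_meas s))
      {?X i -` B \<inter> space (prod_meas s) | B. B \<in> sets (?M i)}" for i
  have components: "P.random_variable (?M i) (?X i)" for i
    unfolding prod_meas_def by (rule measurable_component_singleton) simp
  have "distr (prod_meas s) (PiM UNIV ?M) (\<lambda>x. \<lambda>i\<in>UNIV. ?X i x)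
      = PiM UNIV (\<lambda>i. distr (prod_meas s) (?M i) (?X i))"
    unfolding prod_meas_def restrict_UNIV
    by (auto intro!: PiM_cong distr_PiM_component[symmetric] prob_space_measure_pmf)
  then have "P.indep_vars ?M ?X UNIV"
    using components by (subst P.indep_vars_iff_distr_eq_PiM) auto
  then have indep: "P.indep_sets A UNIV"
    unfolding P.indep_vars_def A_def by simp
  have "T \<in> P.tail_events A"
    unfolding P.tail_events_def
  proof
    fix n
    have "?X i -` B \<in> A i" for i B
      unfolding A_def by (rule sigma_sets.Basic) auto
    then have "{?X i -` B | i B. n \<le> i} \<subseteq> \<Union> (A ` {n..})"
      by blast
    from sigma_sets_mono'[OF this] determined_on_atLeast_in_sigma_sets[OF T tail]
    show "T \<in> sigma_sets (space (prod_meas s)) (\<Union> (A ` {n..}))"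
      by auto
  qed
  moreover have "sigma_algebra (space (prod_meas s)) (A i)" for i
    unfolding A_def by (rule sigma_algebra_sigma_sets) auto
  ultimately have "P.prob T = 0 \<or> P.prob T = 1"
    using P.kolmogorov_0_1_law indep by blast
  then show ?thesis
    by (auto simp: P.emeasure_eq_measure)
qed

definition override_prefix :: "'a list \<Rightarrow> (nat \<Rightarrow> 'a) \<Rightarrow> nat \<Rightarrow> 'a" where
  "override_prefix xs x m = (if m < length xs then xs ! m else x m)"

lemma measurable_override_prefix: "override_prefix xs \<in> measurable (prod_meas s) (prod_meas s)"
proof (rule measurable_prod_measI)
  show "(\<lambda>x. override_prefix xs x i) \<in> measurable (prod_meas s) (count_space UNIV)" for i
    by (cases "i < length xs") (simp_all add: override_prefix_def)
qed

text \<open>The tail set \<open>T\<close> consists of the sequences that eventually agree with a point of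
  \<open>F\<close>; indexing by the finitely many changed initial values makes it a countable union.\<close>
lemma tail_set_between:
  assumes F: "F \<in> sets (prod_meas s)" "F \<subseteq> S" and S: "\<And>n. determined_on {n..} S"
  obtains T where "T \<in> sets (prod_meas s)" "F \<subseteq> T" "T \<subseteq> S" "\<And>n. determined_on {n..} T"
proof
  define T where "T = (\<Union>xs. override_prefix xs -` F)"
  show "T \<in> sets (prod_meas s)"
    unfolding T_def using measurable_sets[OF measurable_override_prefix F(1)]
    by (intro sets.countable_UN'') auto
  have "override_prefix [] x = x" for x :: "nat \<Rightarrow> bool"
    by (simp add: override_prefix_def fun_eq_iff)
  then show "F \<subseteq> T"
    unfolding T_def by (auto intro!: UN_I[of "[]"])
  show "T \<subseteq> S"
  proof
    fix y assume "y \<in> T"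
    then obtain xs where "override_prefix xs y \<in> S"
      using F(2) unfolding T_def by auto
    then show "y \<in> S"
      by (rule determined_onD[OF S[of "length xs"]]) (simp add: override_prefix_def)
  qed
  show "determined_on {n..} T" for n
    unfolding determined_on_def
  proof (intro allI impI)
    fix y z assume "y \<in> T" and yz: "\<forall>i\<in>{n..}. z i = y i"
    then obtain xs where xs: "override_prefix xs y \<in> F"
      unfolding T_def by auto
    define ys where "ys = map (override_prefix xs y) [0..<max (length xs) n]"
    have "override_prefix ys z i = override_prefix xs y i" for i
      using yz by (cases "i < max (length xs) n") (auto simp: override_prefix_def ys_def)
    then have "override_prefix ys z = override_prefix xs y"
      by (rule ext)
    with xs have "z \<in> override_prefix ys -` F"
      by simp
    then show "z \<in> T"
      unfolding T_def by blast
  qed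
qed

lemma completion_prod_meas_tail_zero_one:
  assumes S: "S \<in> sets (completion (prod_meas s))" and tail: "\<And>n. determined_on {n..} S"
  shows "S \<in> null_sets (completion (prod_meas s)) \<or> - S \<in> null_sets (completion (prod_meas s))"
proof -
  interpret P: prob_space "prod_meas s" by (rule prob_space_prod_meas)
  obtain F N N' where S_eq: "S = F \<union> N" and N: "N \<subseteq> N'" "N' \<in> null_sets (prod_meas s)"
    and F: "F \<in> sets (prod_meas s)"
    using S by (rule sets_completionE)
  obtain T where T: "T \<in> sets (prod_meas s)" "F \<subseteq> T" "T \<subseteq> S" "\<And>n. determined_on {n..} T"
    using tail_set_between[OF F _ tail] S_eq by blast
  from prod_meas_tail_zero_one[OF T(1,4)] show ?thesis
  proof
    assume "emeasure (prod_meas s) T = 0"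
    then have "T \<union> N' \<in> null_sets (prod_meas s)"
      using T(1) N(2) by auto
    moreover have "S \<subseteq> T \<union> N'"
      using S_eq T(2) N(1) by auto
    ultimately show ?thesis
      by (auto simp: null_sets_completion_iff2)
  next
    assume "emeasure (prod_meas s) T = 1"
    then have "emeasure (prod_meas s) (space (prod_meas s) - T) = 0"
      using P.prob_compl[OF T(1)] by (simp add: P.emeasure_eq_measure)
    then have "- T \<in> null_sets (prod_meas s)"
      using sets.compl_sets[OF T(1)] by (auto simp: null_sets_def Compl_eq_Diff_UNIV)
    moreover have "- S \<subseteq> - T"
      using T(3) by auto
    ultimately show ?thesis
      by (auto simp: null_sets_completion_iff2)
  qed
qed

section \<open>Filters\<close>

lemma filter_set_mono: "x \<in> filter_set F \<Longrightarrow> (\<And>n. x n \<Longrightarrow> y n) \<Longrightarrow> y \<in> filter_set F"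
  unfolding filter_set_def by (auto elim: eventually_mono)

lemma filter_set_conj:
  "x \<in> filter_set F \<Longrightarrow> y \<in> filter_set F \<Longrightarrow> (\<lambda>n. x n \<and> y n) \<in> filter_set F"
  unfolding filter_set_def by (auto intro: eventually_conj)

lemma determined_on_filter_set:
  assumes F: "F \<le> cofinite" and E: "finite E"
  shows "determined_on (- E) (filter_set F)"
  unfolding determined_on_def
proof (intro allI impI)
  fix x y assume x: "x \<in> filter_set F" and xy: "\<forall>i\<in>- E. y i = x i"
  have "(\<lambda>n. n \<notin> E) \<in> filter_set F"
    using F E by (auto simp: filter_set_def le_filter_def eventually_cofinite)
  with x have "(\<lambda>n. x n \<and> n \<notin> E) \<in> filter_set F"
    by (rule filter_set_conj)
  then show "y \<in> filter_set F"
    by (rule filter_set_mono) (use xy in auto)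
qed

lemma determined_on_atLeast_filter_set: "F \<le> cofinite \<Longrightarrow> determined_on {n..} (filter_set F)"
  using determined_on_filter_set[of F "{..<n}"] by (simp add: Compl_lessThan)

lemma admissible_seqD:
  assumes "admissible_seq s"
  shows "0 \<le> s n" "s n \<le> 1/2" "s n \<le> 1"
  using assms[unfolded admissible_seq_def, rule_format, of n] by auto

lemma filter_set_null_mono:
  assumes F: "F \<le> cofinite"
    and p: "\<And>n. 0 \<le> p n" "\<And>n. p n \<le> 1" and q: "\<And>n. q n \<le> 1"
    and pq: "\<forall>\<^sub>F n in cofinite. p n \<le> q n"
    and null: "filter_set F \<in> null_sets (completion (prod_meas q))"
  shows "filter_set F \<in> null_sets (completion (prod_meas p))"
proof -
  define E where "E = {n. \<not> p n \<le> q n}"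
  define q' where "q' n = (if n \<in> E then p n else q n)" for n
  have "finite E"
    using pq by (simp add: E_def eventually_cofinite)
  then have null': "filter_set F \<in> null_sets (completion (prod_meas q'))"
    by (intro null_sets_prod_meas_eq_on[OF determined_on_filter_set[OF F] _ null])
       (auto simp: q'_def)
  show ?thesis
    by (rule null_sets_prod_meas_upward_closed_mono[OF _ _ _ _ null'])
       (use p q in \<open>auto simp: q'_def E_def elim: filter_set_mono\<close>)
qed

lemma filter_set_null_min:
  assumes null: "filter_set F \<in> null_sets (completion (prod_meas (\<lambda>n. min (p n) (q n))))"
  shows "filter_set F \<in> null_sets (completion (prod_meas p))
    \<or> filter_set F \<in> null_sets (completion (prod_meas q))"
proof -
  define B where "B = {n. q n < p n}"
  define F1 where "F1 = {x. (\<lambda>n. x n \<or> n \<in> B) \<in> filter_set F}"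
  define F2 where "F2 = {x. (\<lambda>n. x n \<or> n \<notin> B) \<in> filter_set F}"
  have F1: "determined_on (- B) F1" and F2: "determined_on B F2"
    unfolding determined_on_def F1_def F2_def by (auto elim!: filter_set_mono)
  have F12: "filter_set F = F1 \<inter> F2"
  proof (intro equalityI subsetI)
    fix x assume "x \<in> F1 \<inter> F2"
    then have "(\<lambda>n. (x n \<or> n \<in> B) \<and> (x n \<or> n \<notin> B)) \<in> filter_set F"
      unfolding F1_def F2_def by (auto intro: filter_set_conj)
    then show "x \<in> filter_set F"
      by (rule filter_set_mono) auto
  qed (auto simp: F1_def F2_def elim: filter_set_mono)
  from null_sets_prod_meas_determined_split[OF F1 F2] null
  have "F1 \<in> null_sets (completion (prod_meas (\<lambda>n. min (p n) (q n))))
      \<or> F2 \<in> null_sets (completion (prod_meas (\<lambda>n. min (p n) (q n))))"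
    unfolding F12 by blast
  then show ?thesis
  proof
    assume "F1 \<in> null_sets (completion (prod_meas (\<lambda>n. min (p n) (q n))))"
    then have "F1 \<in> null_sets (completion (prod_meas p))"
      by (rule null_sets_prod_meas_eq_on[OF F1, rotated]) (simp add: B_def)
    then show ?thesis
      unfolding F12 by (blast intro: null_sets_completion_subset)
  next
    assume "F2 \<in> null_sets (completion (prod_meas (\<lambda>n. min (p n) (q n))))"
    then have "F2 \<in> null_sets (completion (prod_meas q))"
      by (rule null_sets_prod_meas_eq_on[OF F2, rotated]) (simp add: B_def)
    then show ?thesis
      unfolding F12 by (blast intro: null_sets_completion_subset)
  qed
qed

lemma filter_set_not_conull:
  assumes proper: "F \<noteq> bot" and r: "\<And>n. 0 \<le> r n" "\<And>n. r n \<le> 1/2"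
  shows "- filter_set F \<notin> null_sets (completion (prod_meas r))"
proof
  assume conull: "- filter_set F \<in> null_sets (completion (prod_meas r))"
  define H where "H = {x. (\<lambda>n. \<not> x n) \<in> - filter_set F}"
  have H_null: "H \<in> null_sets (completion (prod_meas (\<lambda>n. 1 - r n)))"
    unfolding H_def
  proof (rule null_sets_prod_meas_Not[OF _ _ conull])
    show "r n \<le> 1" for n
      using r(2)[of n] by simp
  qed (use r in auto)
  have "H \<in> null_sets (completion (prod_meas r))"
  proof (rule null_sets_prod_meas_upward_closed_mono[OF _ _ _ _ H_null])
    show "y \<in> H" if "x \<in> H" "\<And>n. x n \<Longrightarrow> y n" for x y
      using that filter_set_mono[of "\<lambda>n. \<not> y n" F "\<lambda>n. \<not> x n"] by (auto simp: H_def)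
    show "r n \<le> 1 - r n" "1 - r n \<le> 1" for n
      using r[of n] by auto
  qed (use r in auto)
  moreover have "filter_set F \<subseteq> H"
  proof
    fix x assume "x \<in> filter_set F"
    show "x \<in> H"
    proof (rule ccontr)
      assume "x \<notin> H"
      then have "(\<lambda>n. \<not> x n) \<in> filter_set F"
        by (simp add: H_def)
      with \<open>x \<in> filter_set F\<close> have "(\<lambda>n. x n \<and> \<not> x n) \<in> filter_set F"
        by (rule filter_set_conj)
      with proper show False
        by (simp add: filter_set_def)
    qed
  qed
  ultimately have "filter_set F \<union> - filter_set F \<in> null_sets (completion (prod_meas r))"
    using conull null_sets_completion_subset by blast
  then show False
    using prob_space.emeasure_space_1[OF prob_space_prod_meas, of r] sets.top[of "prod_meas r"]
    by (simp add: null_sets_def)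
qed

lemma filter_set_null_if_measurable:
  assumes proper: "F \<noteq> bot" and nonprincipal: "F \<le> cofinite"
    and r: "\<And>n. 0 \<le> r n" "\<And>n. r n \<le> 1/2"
    and measurable: "filter_set F \<in> sets (completion (prod_meas r))"
  shows "filter_set F \<in> null_sets (completion (prod_meas r))"
  using completion_prod_meas_tail_zero_one[OF measurable determined_on_atLeast_filter_set[OF nonprincipal]]
    filter_set_not_conull[of F r] proper r by blast

theorem theorem1p3:
  fixes F :: "nat filter" and p q :: "nat \<Rightarrow> real"
  assumes proper: "F \<noteq> bot"
    and nonprincipal: "F \<le> cofinite"
    and p: "admissible_seq p" and q: "admissible_seq q"
  shows "((\<forall>\<^sub>F n in cofinite. p n \<le> q n)
            \<and> filter_set F \<in> null_sets (completion (prod_meas q))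
          \<longrightarrow> filter_set F \<in> null_sets (completion (prod_meas p)))
       \<and> (filter_set F \<notin> sets (completion (prod_meas p))
            \<and> filter_set F \<notin> sets (completion (prod_meas q))
          \<longrightarrow> filter_set F \<notin> sets (completion (prod_meas (\<lambda>n. min (p n) (q n)))))"
proof (intro conjI impI)
  assume "(\<forall>\<^sub>F n in cofinite. p n \<le> q n) \<and> filter_set F \<in> null_sets (completion (prod_meas q))"
  then show "filter_set F \<in> null_sets (completion (prod_meas p))"
    using filter_set_null_mono[OF nonprincipal] admissible_seqD[OF p] admissible_seqD[OF q] by blast
next
  assume nonmeasurable: "filter_set F \<notin> sets (completion (prod_meas p))
    \<and> filter_set F \<notin> sets (completion (prod_meas q))"
  show "filter_set F \<notin> sets (completion (prod_meas (\<lambda>n. min (p n) (q n))))"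
  proof
    have r: "admissible_seq (\<lambda>n. min (p n) (q n))"
      using p q by (auto simp: admissible_seq_def min_def)
    assume "filter_set F \<in> sets (completion (prod_meas (\<lambda>n. min (p n) (q n))))"
    then have "filter_set F \<in> null_sets (completion (prod_meas (\<lambda>n. min (p n) (q n))))"
      by (rule filter_set_null_if_measurable[OF proper nonprincipal admissible_seqD(1,2)[OF r]])
    then show False
      using filter_set_null_min nonmeasurable by (blast dest: null_setsD2)
  qed
qed

end
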